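(* Let $\mathcal{W}(u,v,w):=\exp\bigl[-(u+v+w)^2-w^2-\tfrac12(u-v)^2\bigr]$ and, for $x',y',z',x,y,z\ge0$, $$\begin{aligned}K_2(x',y',z';x,y,z)={}&[1-e^{-4(x'+y'+z')(x+y+z)}](1-e^{-4z'z})\\&+e^{-4x'x-4y'y}[1-e^{-4z'(x+y+z)}][1-e^{-4(x'+y'+z')z}]\\&-e^{-4x'x}[1-e^{-4(y'+z')(x+y+z)}][1-e^{-4(x'+z')z}]\\&-e^{-4y'y}[1-e^{-4(x'+z')(x+y+z)}][1-e^{-4(y'+z')z}]\\&+e^{-4x'x-4z'(x+z)}[1-e^{-4y'(x+y+z)}](1-e^{-4x'z})\\&+e^{-4y'y-4z'(y+z)}[1-e^{-4x'(x+y+z)}](1-e^{-4y'z}).\end{aligned}$$ Then $K_2(x',y',z';0,0,z)=0$, $\partial_xK_2|_{x=y=0}=\partial_yK_2|_{x=y=0}=0$, and for all $x,y,z\ge0$ $$\frac{\sqrt2}{\pi^{3/2}}\int_{\mathbb{R}_+^3}\mathcal{W}(x-x',y-y',z-z')\,K_2(x',y',z';x,y,z)\,\mathrm{d}x'\mathrm{d}y'\mathrm{d}z'=\operatorname{erf}(x)\operatorname{erf}(y)+\operatorname{erf}(z)\operatorname{erf}(x+y+z)-\operatorname{erf}(x+z)\operatorname{erf}(y+z).$$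
   Context: All lengths are measured in units of the diffusion length $\ell_0=\sqrt{8Dt}$. $\mathcal{W}$ is (up to normalisation) the Gaussian propagator of the two-interval diffusion equation $\partial_tE=2D[\partial_x^2+\partial_y^2+\partial_z^2-\partial_x\partial_z-\partial_y\partial_z]E$, and $K_2$ is the kernel through which the initial two-interval probability enters the two-interval probability of the coagulation-diffusion process; the identity expresses the fact that an initially empty lattice stays empty. *)

theory Defs
  imports "HOL-Analysis.Analysis"
begin

definition erf :: "real \<Rightarrow> real" where
  "erf x = 2 / sqrt pi * (LBINT t=0..x. exp (- (t\<^sup>2)))"

definition W :: "real \<Rightarrow> real \<Rightarrow> real \<Rightarrow> real" where
  "W u v w = exp (- ((u + v + w)\<^sup>2) - w\<^sup>2 - (1/2) * (u - v)\<^sup>2)"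

definition K2 :: "real \<Rightarrow> real \<Rightarrow> real \<Rightarrow> real \<Rightarrow> real \<Rightarrow> real \<Rightarrow> real" where
  "K2 x' y' z' x y z =
      (1 - exp (-4 * (x' + y' + z') * (x + y + z))) * (1 - exp (-4 * z' * z))
    + exp (-4 * x' * x - 4 * y' * y) * (1 - exp (-4 * z' * (x + y + z))) * (1 - exp (-4 * (x' + y' + z') * z))
    - exp (-4 * x' * x) * (1 - exp (-4 * (y' + z') * (x + y + z))) * (1 - exp (-4 * (x' + z') * z))
    - exp (-4 * y' * y) * (1 - exp (-4 * (x' + z') * (x + y + z))) * (1 - exp (-4 * (y' + z') * z))
    + exp (-4 * x' * x - 4 * z' * (x + z)) * (1 - exp (-4 * y' * (x + y + z))) * (1 - exp (-4 * x' * z))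
    + exp (-4 * y' * y - 4 * z' * (y + z)) * (1 - exp (-4 * x' * (x + y + z))) * (1 - exp (-4 * y' * z))"

end

theory Submission
  imports Defs "HOL-Probability.Probability"
begin

text \<open>
  Proof by the method of images.  Write \<open>G u = W u\<^sub>1 u\<^sub>2 u\<^sub>3 = exp (- B3 u u)\<close> for an explicit
  symmetric bilinear form \<open>B3\<close> on \<open>\<real>\<^sup>3\<close>.  The three linear reflections \<open>rx, ry, rz\<close> preserve \<open>B3\<close>
  and Lebesgue measure; they generate a group of 24 maps (a Coxeter group of type A3), listed
  below as words in the generators, the sign of a word being \<open>(-1)^length\<close>.  Two algebraic
  identities carry the argument:
  (1) \<open>G (X - p) K2(p; X) = \<Sum>\<^sub>g sign g * G (g X - p)\<close>, i.e. \<open>K2\<close> is the image sum of the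
      propagator; it also shows at once that \<open>K2\<close> vanishes on the mirrors \<open>x = 0\<close> and \<open>y = 0\<close>;
  (2) \<open>\<Sum>\<^sub>g sign g * 1\<^sub>o\<^sub>c\<^sub>t\<^sub>a\<^sub>n\<^sub>t (g q) = sgn a sgn b + sgn c sgn (a+b+c) - sgn (a+c) sgn (b+c)\<close>.
  Integrating (1) over the octant and substituting \<open>p = g q\<close> in each term turns the integral into
  \<open>\<integral> G (X - q) (\<Sum>\<^sub>g sign g * 1\<^sub>o\<^sub>c\<^sub>t\<^sub>a\<^sub>n\<^sub>t (g q)) dq\<close>; by (2) and one more symmetry substitution this is
  a combination of integrals \<open>\<integral> G (X - q) sgn q\<^sub>1 sgn q\<^sub>2 dq\<close>, which factorise by Fubini into
  products of two error functions.
\<close>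

type_synonym R3 = "real \<times> real \<times> real"

lemma nn_integral_lborel3:
  fixes f :: "R3 \<Rightarrow> ennreal"
  assumes [measurable]: "f \<in> borel_measurable borel"
  shows "(\<integral>\<^sup>+q. f q \<partial>lborel) = (\<integral>\<^sup>+a. \<integral>\<^sup>+b. \<integral>\<^sup>+c. f (a, b, c) \<partial>lborel \<partial>lborel \<partial>lborel)"
proof -
  have sf: "sigma_finite_measure (lborel \<Otimes>\<^sub>M lborel :: (real \<times> real) measure)"
    by (simp add: lborel_prod lborel.sigma_finite_measure_axioms)
  have "(\<integral>\<^sup>+q. f q \<partial>lborel) = (\<integral>\<^sup>+q. f q \<partial>(lborel \<Otimes>\<^sub>M (lborel \<Otimes>\<^sub>M lborel)))"
    by (simp add: lborel_prod)
  also have "\<dots> = (\<integral>\<^sup>+a. \<integral>\<^sup>+bc. f (a, bc) \<partial>(lborel \<Otimes>\<^sub>M lborel) \<partial>lborel)"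
    by (rule sigma_finite_measure.nn_integral_fst[symmetric, OF sf]) (simp add: lborel_prod)
  also have "\<dots> = (\<integral>\<^sup>+a. \<integral>\<^sup>+b. \<integral>\<^sup>+c. f (a, b, c) \<partial>lborel \<partial>lborel \<partial>lborel)"
    by (intro nn_integral_cong lborel.nn_integral_fst[symmetric]) (simp add: lborel_prod)
  finally show ?thesis .
qed

lemma integral_lborel3:
  fixes f :: "R3 \<Rightarrow> real"
  assumes f: "integrable lborel f"
  shows "(\<integral>q. f q \<partial>lborel) = (\<integral>a. \<integral>b. \<integral>c. f (a, b, c) \<partial>lborel \<partial>lborel \<partial>lborel)"
proof -
  interpret P2: pair_sigma_finite lborel "lborel \<Otimes>\<^sub>M lborel :: (real \<times> real) measure"
    by (simp add: lborel_prod lborel.sigma_finite_measure_axioms pair_sigma_finite.intro)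
  have f2: "integrable (lborel \<Otimes>\<^sub>M (lborel \<Otimes>\<^sub>M lborel)) f"
    using f by (simp add: lborel_prod)
  then have [measurable]: "f \<in> borel_measurable borel"
    using f by auto
  have "(\<integral>q. f q \<partial>lborel) = (\<integral>a. \<integral>bc. f (a, bc) \<partial>(lborel \<Otimes>\<^sub>M lborel) \<partial>lborel)"
    using P2.integral_fst'[OF f2] by (simp add: lborel_prod)
  also have "\<dots> = (\<integral>a. \<integral>b. \<integral>c. f (a, b, c) \<partial>lborel \<partial>lborel \<partial>lborel)"
  proof (rule integral_cong_AE)
    show "AE a in lborel. (\<integral>bc. f (a, bc) \<partial>(lborel \<Otimes>\<^sub>M lborel)) = (\<integral>b. \<integral>c. f (a, b, c) \<partial>lborel \<partial>lborel)"
      using P2.AE_integrable_fst'[OF f2]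
      by eventually_elim (simp add: lborel_pair.integral_fst'[symmetric])
  qed (use P2.integrable_fst'[OF f2] in auto)
  finally show ?thesis .
qed

definition lborel_preserving :: "(R3 \<Rightarrow> R3) \<Rightarrow> bool" where
  "lborel_preserving g \<longleftrightarrow> g \<in> borel_measurable borel \<and> distr lborel borel g = lborel"

lemma lborel_preserving_integral:
  fixes f :: "R3 \<Rightarrow> real"
  assumes "lborel_preserving g" "f \<in> borel_measurable borel"
  shows "(\<integral>q. f (g q) \<partial>lborel) = (\<integral>q. f q \<partial>lborel)"
  using integral_distr[of g lborel borel f] assms by (simp add: lborel_preserving_def)

lemma lborel_preserving_comp:
  assumes "lborel_preserving g" "lborel_preserving h"
  shows "lborel_preserving (g \<circ> h)"
  using assms distr_distr[of g borel borel h lborel]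
  by (auto simp: lborel_preserving_def)

lemma lborel_preservingI:
  assumes g[measurable]: "g \<in> borel_measurable borel"
    and nn: "\<And>f :: R3 \<Rightarrow> ennreal. f \<in> borel_measurable borel \<Longrightarrow>
               (\<integral>\<^sup>+q. f (g q) \<partial>lborel) = (\<integral>\<^sup>+q. f q \<partial>lborel)"
  shows "lborel_preserving g"
  unfolding lborel_preserving_def
proof (intro conjI g measure_eqI)
  fix A assume "A \<in> sets (distr lborel borel g)"
  then have A[measurable]: "A \<in> sets borel" by simp
  have "emeasure (distr lborel borel g) A = emeasure lborel (g -` A)"
    by (simp add: emeasure_distr)
  also have "\<dots> = (\<integral>\<^sup>+q. indicator (g -` A) q \<partial>lborel)"
    using measurable_sets[OF g A] by simp
  also have "\<dots> = (\<integral>\<^sup>+q. indicator A (g q) \<partial>lborel)"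
    by (simp add: indicator_vimage)
  also have "\<dots> = emeasure lborel A"
    using nn[of "indicator A"] by simp
  finally show "emeasure (distr lborel borel g) A = emeasure lborel A" .
qed simp

text \<open>Lower triangular linear maps with diagonal entries \<open>\<plusminus>1\<close>: integrate the innermost
  coordinate first, each step being a one-dimensional translation or reflection.\<close>

lemma lborel_preserving_shear:
  assumes s: "\<bar>s1\<bar> = 1" "\<bar>s2\<bar> = 1" "\<bar>s3\<bar> = 1"
  shows "lborel_preserving (\<lambda>(a, b, c). (s1 * a, k21 * a + s2 * b, k31 * a + k32 * b + s3 * c))"
    (is "lborel_preserving ?g")
proof (rule lborel_preservingI)
  have affine1: "(\<integral>\<^sup>+x. F (t + s * x) \<partial>lborel) = (\<integral>\<^sup>+x. F x \<partial>lborel)"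
    if "\<bar>s\<bar> = 1" "F \<in> borel_measurable borel" for F :: "real \<Rightarrow> ennreal" and s t
    using nn_integral_real_affine[OF that(2), of s t] that(1) by auto
  show g[measurable]: "?g \<in> borel_measurable borel"
    by (intro borel_measurable_continuous_onI) (simp add: case_prod_beta' continuous_intros)
  fix f :: "R3 \<Rightarrow> ennreal" assume f[measurable]: "f \<in> borel_measurable borel"
  then have [measurable]: "f \<in> borel_measurable (borel \<Otimes>\<^sub>M (borel \<Otimes>\<^sub>M borel))"
    by (simp add: borel_prod)
  have "(\<integral>\<^sup>+q. f (?g q) \<partial>lborel)
      = (\<integral>\<^sup>+a. \<integral>\<^sup>+b. \<integral>\<^sup>+c. f (s1 * a, k21 * a + s2 * b, (k31 * a + k32 * b) + s3 * c) \<partial>lborel \<partial>lborel \<partial>lborel)"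
    by (subst nn_integral_lborel3) (auto intro: measurable_compose[OF g f])
  also have "\<dots> = (\<integral>\<^sup>+a. \<integral>\<^sup>+b. \<integral>\<^sup>+c. f (s1 * a, k21 * a + s2 * b, c) \<partial>lborel \<partial>lborel \<partial>lborel)"
    by (intro nn_integral_cong affine1[OF s(3)]) measurable
  also have "\<dots> = (\<integral>\<^sup>+a. \<integral>\<^sup>+b. \<integral>\<^sup>+c. f (s1 * a, b, c) \<partial>lborel \<partial>lborel \<partial>lborel)"
    by (intro nn_integral_cong affine1[OF s(2)]) measurable
  also have "\<dots> = (\<integral>\<^sup>+a. \<integral>\<^sup>+b. \<integral>\<^sup>+c. f (a, b, c) \<partial>lborel \<partial>lborel \<partial>lborel)"
    by (rule affine1[OF s(1), where t=0, simplified]) measurable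
  also have "\<dots> = (\<integral>\<^sup>+q. f q \<partial>lborel)"
    by (rule nn_integral_lborel3[symmetric]) measurable
  finally show "(\<integral>\<^sup>+q. f (?g q) \<partial>lborel) = (\<integral>\<^sup>+q. f q \<partial>lborel)" .
qed

text \<open>Reversing the order of the coordinates is Tonelli's theorem.\<close>

lemma lborel_preserving_reverse: "lborel_preserving (\<lambda>(a, b, c). (c, b, a))"
  (is "lborel_preserving ?r")
proof (rule lborel_preservingI)
  show r[measurable]: "?r \<in> borel_measurable borel"
    by (intro borel_measurable_continuous_onI) (simp add: case_prod_beta' continuous_intros)
  fix f :: "R3 \<Rightarrow> ennreal" assume f[measurable]: "f \<in> borel_measurable borel"
  then have [measurable]: "f \<in> borel_measurable (borel \<Otimes>\<^sub>M (borel \<Otimes>\<^sub>M borel))"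
    by (simp add: borel_prod)
  have "(\<integral>\<^sup>+q. f (?r q) \<partial>lborel) = (\<integral>\<^sup>+a. \<integral>\<^sup>+b. \<integral>\<^sup>+c. f (c, b, a) \<partial>lborel \<partial>lborel \<partial>lborel)"
    by (subst nn_integral_lborel3) (auto intro: measurable_compose[OF r f])
  also have "\<dots> = (\<integral>\<^sup>+a. \<integral>\<^sup>+c. \<integral>\<^sup>+b. f (c, b, a) \<partial>lborel \<partial>lborel \<partial>lborel)"
    by (intro nn_integral_cong lborel_pair.Fubini') measurable
  also have "\<dots> = (\<integral>\<^sup>+c. \<integral>\<^sup>+a. \<integral>\<^sup>+b. f (c, b, a) \<partial>lborel \<partial>lborel \<partial>lborel)"
    by (rule lborel_pair.Fubini'[symmetric]) measurable
  also have "\<dots> = (\<integral>\<^sup>+c. \<integral>\<^sup>+b. \<integral>\<^sup>+a. f (c, b, a) \<partial>lborel \<partial>lborel \<partial>lborel)"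
    by (intro nn_integral_cong lborel_pair.Fubini'[symmetric]) measurable
  also have "\<dots> = (\<integral>\<^sup>+q. f q \<partial>lborel)"
    by (rule nn_integral_lborel3[symmetric]) measurable
  finally show "(\<integral>\<^sup>+q. f (?r q) \<partial>lborel) = (\<integral>\<^sup>+q. f q \<partial>lborel)" .
qed

text \<open>One-dimensional Gaussian integrals, obtained by rescaling the normal density.\<close>

lemma gaussian_has_integral:
  assumes "0 < \<alpha>"
  shows "has_bochner_integral lborel (\<lambda>t. exp (- (\<alpha> * (t - m)\<^sup>2))) (sqrt (pi / \<alpha>))"
proof -
  define \<sigma> where "\<sigma> = sqrt (1 / (2 * \<alpha>))"
  have \<sigma>: "0 < \<sigma>" "\<sigma>\<^sup>2 = 1 / (2 * \<alpha>)"
    using assms by (simp_all add: \<sigma>_def)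
  have "exp (- (\<alpha> * (t - m)\<^sup>2)) = sqrt (pi / \<alpha>) * normal_density m \<sigma> t" for t
  proof -
    have "2 * pi * \<sigma>\<^sup>2 = pi / \<alpha>" "- (t - m)\<^sup>2 / (2 * \<sigma>\<^sup>2) = - (\<alpha> * (t - m)\<^sup>2)"
      using \<sigma> assms by (simp_all add: field_simps)
    moreover have "0 < sqrt (pi / \<alpha>)"
      using assms by simp
    ultimately show ?thesis
      using assms by (simp add: normal_density_def)
  qed
  moreover have "has_bochner_integral lborel (\<lambda>t. sqrt (pi / \<alpha>) * normal_density m \<sigma> t) (sqrt (pi / \<alpha>) * 1)"
    using \<sigma>(1) by (intro has_bochner_integral_mult_right) (simp add: has_bochner_integral_iff)
  ultimately show ?thesis
    by simp
qed

lemma gaussian_integral: "0 < \<alpha> \<Longrightarrow> (\<integral>t. exp (- (\<alpha> * (t - m)\<^sup>2)) \<partial>lborel) = sqrt (pi / \<alpha>)"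
  using gaussian_has_integral[of \<alpha> m] by (simp add: has_bochner_integral_iff)

lemma gaussian_nn_integral:
  "0 < \<alpha> \<Longrightarrow> (\<integral>\<^sup>+t. ennreal (exp (- (\<alpha> * (t - m)\<^sup>2))) \<partial>lborel) = ennreal (sqrt (pi / \<alpha>))"
  using gaussian_has_integral[of \<alpha> m]
  by (subst nn_integral_eq_integral) (auto simp: has_bochner_integral_iff)

lemma gaussian_integrable:
  fixes m :: real
  shows "integrable lborel (\<lambda>t. exp (- ((t - m)\<^sup>2)))"
  using gaussian_has_integral[of 1 m] by (simp add: has_bochner_integral_iff)

text \<open>The error function as a Gaussian smoothing of the sign function: splitting \<open>sgn\<close> into its
  positive and negative parts gives two Gaussian tails, \<open>\<integral>\<^sub>-\<^sub>x\<^sup>\<infinity> - \<integral>\<^sub>x\<^sup>\<infinity> = \<integral>\<^sub>-\<^sub>x\<^sup>x = 2 \<integral>\<^sub>0\<^sup>x\<close>.\<close>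

lemma gaussian_tail_integrable: "interval_lebesgue_integrable lborel (ereal a) \<infinity> (\<lambda>s. exp (- (s\<^sup>2)))"
  unfolding interval_integrable_to_infinity_eq set_integrable_def
  using integrable_mult_indicator[OF _ gaussian_integrable[of 0], of "{a<..}"] by simp

lemma gaussian_right_tail:
  "(\<integral>t. indicator {0<..} t * exp (- ((t - x)\<^sup>2)) \<partial>lborel) = (LBINT s=ereal (- x)..\<infinity>. exp (- (s\<^sup>2)))"
proof -
  have "(\<integral>t. indicator {0<..} t * exp (- ((t - x)\<^sup>2)) \<partial>lborel)
      = (\<integral>s. indicator {- x<..} s * exp (- (s\<^sup>2)) \<partial>lborel)"
    using lborel_integral_real_affine[where c=1 and t="- x" and f="\<lambda>s. indicator {- x<..} s * exp (- (s\<^sup>2))"]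
    by (simp add: indicator_def algebra_simps)
  then show ?thesis
    by (simp add: interval_integral_to_infinity_eq set_lebesgue_integral_def mult.commute)
qed

lemma gaussian_left_tail:
  "(\<integral>t. indicator {..<0} t * exp (- ((t - x)\<^sup>2)) \<partial>lborel) = (LBINT s=ereal x..\<infinity>. exp (- (s\<^sup>2)))"
proof -
  have "(\<integral>t. indicator {..<0} t * exp (- ((t - x)\<^sup>2)) \<partial>lborel)
      = (\<integral>s. indicator {x<..} s * exp (- (s\<^sup>2)) \<partial>lborel)"
    using lborel_integral_real_affine[where c="- 1" and t=x and f="\<lambda>s. indicator {x<..} s * exp (- (s\<^sup>2))"]
    by (simp add: indicator_def power2_commute algebra_simps)
  then show ?thesis
    by (simp add: interval_integral_to_infinity_eq set_lebesgue_integral_def mult.commute)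
qed

lemma gaussian_sgn_integral: "(\<integral>t. exp (- ((t - x)\<^sup>2)) * sgn t \<partial>lborel) = sqrt pi * erf x"
proof -
  have int: "integrable lborel (\<lambda>t. indicator S t * exp (- ((t - x)\<^sup>2)))" if "S \<in> sets borel" for S
    using integrable_mult_indicator[OF _ gaussian_integrable, of S] that by simp
  have "(\<integral>t. exp (- ((t - x)\<^sup>2)) * sgn t \<partial>lborel)
      = (\<integral>t. indicator {0<..} t * exp (- ((t - x)\<^sup>2)) - indicator {..<0} t * exp (- ((t - x)\<^sup>2)) \<partial>lborel)"
    by (intro Bochner_Integration.integral_cong) (auto split: split_indicator simp: sgn_if)
  also have "\<dots> = (LBINT s=ereal (- x)..\<infinity>. exp (- (s\<^sup>2))) - (LBINT s=ereal x..\<infinity>. exp (- (s\<^sup>2)))"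
    by (simp add: int gaussian_right_tail gaussian_left_tail)
  also have "\<dots> = (LBINT s=ereal (- x)..ereal x. exp (- (s\<^sup>2)))"
    using interval_integral_sum[of "ereal (- x)" "ereal x" \<infinity> "\<lambda>s. exp (- (s\<^sup>2))"]
      gaussian_tail_integrable[of "min (- x) x"]
    by (simp add: min_def max_def split: if_splits)
  also have "\<dots> = (LBINT s=ereal (- x)..0. exp (- (s\<^sup>2))) + (LBINT s=0..ereal x. exp (- (s\<^sup>2)))"
    by (rule interval_integral_sum[symmetric])
      (auto simp: min_def max_def zero_ereal_def intro!: interval_integrable_isCont continuous_intros)
  also have "(LBINT s=ereal (- x)..0. exp (- (s\<^sup>2))) = (LBINT s=0..ereal x. exp (- (s\<^sup>2)))"
    by (subst interval_integral_reflect) (simp add: zero_ereal_def)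
  finally show ?thesis
    by (simp add: erf_def zero_ereal_def)
qed

definition B3 :: "R3 \<Rightarrow> R3 \<Rightarrow> real" where
  "B3 u p = (case u of (u1, u2, u3) \<Rightarrow> case p of (p1, p2, p3) \<Rightarrow>
     (u1 + u2 + u3) * (p1 + p2 + p3) + u3 * p3 + (u1 - u2) * (p1 - p2) / 2)"

definition G :: "R3 \<Rightarrow> real" where
  "G u = W (fst u) (fst (snd u)) (snd (snd u))"

lemma G_exp_B3: "G u = exp (- B3 u u)"
  by (cases u) (simp add: G_def W_def B3_def power2_eq_square field_simps)

lemma G_nonneg: "0 \<le> G u"
  by (simp add: G_exp_B3)

lemma G_measurable[measurable]: "(\<lambda>q. G (v - q)) \<in> borel_measurable borel"
  unfolding G_def W_def by (intro borel_measurable_continuous_onI continuous_intros)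

lemma R3_coordinates_measurable[measurable]:
  "(\<lambda>q :: R3. fst q) \<in> borel_measurable borel"
  "(\<lambda>q :: R3. fst (snd q)) \<in> borel_measurable borel"
  "(\<lambda>q :: R3. snd (snd q)) \<in> borel_measurable borel"
  by (intro borel_measurable_continuous_onI continuous_intros)+

text \<open>Moving the centre of \<open>G\<close> between two points of equal \<open>B3\<close>-length only multiplies it by
  the exponential of a bilinear expression; this is how the kernel \<open>K2\<close> arises.\<close>

lemma G_shift:
  assumes "B3 u u = B3 v v"
  shows "G (u - p) = G (v - p) * exp (2 * (B3 u p - B3 v p))"
proof -
  have expand: "B3 (w - p) (w - p) = B3 w w - 2 * B3 w p + B3 p p" for w
    by (cases w, cases p) (simp add: B3_def field_simps)
  show ?thesis
    unfolding G_exp_B3 expand mult_exp_exp using assms by (simp add: algebra_simps)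
qed

text \<open>Completing the square in the last variable, \<open>W (x - a) (y - b) (z - c)\<close> is a product of
  three one-dimensional Gaussians; with Fubini this computes all integrals of \<open>G\<close> below.\<close>

lemma W_factor:
  "W (x - a) (y - b) (z - c) =
     exp (- ((a - x)\<^sup>2)) * exp (- ((b - y)\<^sup>2)) * exp (- (2 * (c - (z + (x - a + y - b) / 2))\<^sup>2))"
  unfolding W_def mult_exp_exp by (simp add: power2_eq_square field_simps)

lemma G_nn_integral: "(\<integral>\<^sup>+q. ennreal (G (v - q)) \<partial>lborel) = ennreal (pi * sqrt (pi / 2))"
proof -
  obtain x y z where v: "v = (x, y, z)"
    by (cases v)
  let ?g = "\<lambda>m t. ennreal (exp (- ((t - m)\<^sup>2)))"
  have "(\<integral>\<^sup>+q. ennreal (G (v - q)) \<partial>lborel) =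
      (\<integral>\<^sup>+a. \<integral>\<^sup>+b. \<integral>\<^sup>+c. ?g x a * ?g y b *
         ennreal (exp (- (2 * (c - (z + (x - a + y - b) / 2))\<^sup>2))) \<partial>lborel \<partial>lborel \<partial>lborel)"
  proof (subst nn_integral_lborel3)
    show "(\<lambda>q. ennreal (G (v - q))) \<in> borel_measurable borel"
      by measurable
  qed (simp add: v G_def W_factor ennreal_mult power2_commute)
  also have "\<dots> = (\<integral>\<^sup>+a. \<integral>\<^sup>+b. ?g x a * ennreal (sqrt (pi / 2)) * ?g y b \<partial>lborel \<partial>lborel)"
    by (intro nn_integral_cong, subst nn_integral_cmult) (simp_all add: gaussian_nn_integral mult_ac)
  also have "\<dots> = (\<integral>\<^sup>+a. ?g x a * ennreal (sqrt (pi / 2) * sqrt pi) \<partial>lborel)"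
    using gaussian_nn_integral[of 1 y]
    by (intro nn_integral_cong, subst nn_integral_cmult) (simp_all add: ennreal_mult mult.assoc)
  also have "\<dots> = ennreal (sqrt pi * (sqrt (pi / 2) * sqrt pi))"
    using gaussian_nn_integral[of 1 x] by (subst nn_integral_multc) (simp_all add: ennreal_mult)
  finally show ?thesis
    by (simp add: mult_ac)
qed

lemma G_integrable_bounded:
  assumes [measurable]: "f \<in> borel_measurable borel" and bound: "\<And>q. \<bar>f q\<bar> \<le> 1"
  shows "integrable lborel (\<lambda>q. G (v - q) * f q)"
proof (rule Bochner_Integration.integrable_bound)
  show "integrable lborel (\<lambda>q. G (v - q))"
    by (rule integrableI_nonneg) (simp_all add: G_nonneg G_nn_integral)
  show "AE q in lborel. norm (G (v - q) * f q) \<le> norm (G (v - q))"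
    using bound by (simp add: abs_mult G_nonneg mult_left_le)
qed simp

lemma G_sgn_sgn_integral:
  "(\<integral>q. G (v - q) * (sgn (fst q) * sgn (fst (snd q))) \<partial>lborel)
     = pi * sqrt (pi / 2) * erf (fst v) * erf (fst (snd v))"
proof -
  obtain x y z where v: "v = (x, y, z)"
    by (cases v)
  have "(\<integral>q. G (v - q) * (sgn (fst q) * sgn (fst (snd q))) \<partial>lborel)
      = (\<integral>a. \<integral>b. \<integral>c. (exp (- ((a - x)\<^sup>2)) * sgn a) * (exp (- ((b - y)\<^sup>2)) * sgn b) *
           exp (- (2 * (c - (z + (x - a + y - b) / 2))\<^sup>2)) \<partial>lborel \<partial>lborel \<partial>lborel)"
  proof (subst integral_lborel3)
    show "integrable lborel (\<lambda>q. G (v - q) * (sgn (fst q) * sgn (fst (snd q))))"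
      by (rule G_integrable_bounded) (measurable, auto simp: abs_mult sgn_if)
  qed (simp add: v G_def W_factor mult_ac power2_commute)
  also have "\<dots> = (\<integral>a. \<integral>b. (exp (- ((a - x)\<^sup>2)) * sgn a * sqrt (pi / 2)) * (exp (- ((b - y)\<^sup>2)) * sgn b) \<partial>lborel \<partial>lborel)"
    by (simp add: gaussian_integral mult_ac)
  also have "\<dots> = (\<integral>a. (exp (- ((a - x)\<^sup>2)) * sgn a) * (sqrt (pi / 2) * (sqrt pi * erf y)) \<partial>lborel)"
    by (simp only: Bochner_Integration.integral_mult_right_zero gaussian_sgn_integral mult.assoc)
  also have "\<dots> = sqrt pi * erf x * (sqrt (pi / 2) * (sqrt pi * erf y))"
    by (simp add: gaussian_sgn_integral)
  finally show ?thesis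
    by (simp add: v mult_ac)
qed

text \<open>The generators \<open>rx, ry, rz\<close> are linear reflections in the planes
  \<open>x = 0\<close>, \<open>y = 0\<close>, \<open>z = 0\<close> with respect to \<open>B3\<close>; a word denotes the composition of its letters.\<close>

definition rx :: "R3 \<Rightarrow> R3" where "rx = (\<lambda>(a, b, c). (- a, b, a + c))"
definition ry :: "R3 \<Rightarrow> R3" where "ry = (\<lambda>(a, b, c). (a, - b, b + c))"
definition rz :: "R3 \<Rightarrow> R3" where "rz = (\<lambda>(a, b, c). (a + c, b + c, - c))"

definition word_map :: "(R3 \<Rightarrow> R3) list \<Rightarrow> R3 \<Rightarrow> R3" where
  "word_map ws = foldr (\<circ>) ws id"

text \<open>One word for each of the 24 elements of the group; the sign of an element is
  \<open>(-1)^(length of its word)\<close>.\<close>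

definition image_words :: "(R3 \<Rightarrow> R3) list list" where
  "image_words =
    [[], [rx, ry, rz, rx, ry], [rz], [rx, ry, rz, rx, ry, rz], [rx, ry], [rz, rx, ry], [rx, ry, rz],
     [rz, rx, ry, rz], [rx], [ry, rz, rx, ry], [rx, rz], [ry, rz, rx, ry, rz], [ry], [rx, rz, rx, ry],
     [ry, rz], [rx, rz, rx, ry, rz], [rz, rx], [ry, rz, rx], [rx, rz, rx], [rx, ry, rz, rx],
     [rz, ry], [rx, rz, ry], [ry, rz, ry], [rx, ry, rz, ry]]"

definition symmetry :: "(R3 \<Rightarrow> R3) \<Rightarrow> bool" where
  "symmetry g \<longleftrightarrow> lborel_preserving g \<and> (\<forall>u v. g (u - v) = g u - g v) \<and> (\<forall>u v. B3 (g u) (g v) = B3 u v)"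

lemma symmetry_id: "symmetry id"
  by (simp add: symmetry_def lborel_preserving_def id_def distr_id2)

lemma symmetry_comp:
  assumes g: "symmetry g" and h: "symmetry h"
  shows "symmetry (g \<circ> h)"
proof -
  have "\<And>u v. g (u - v) = g u - g v" "\<And>u v. B3 (g u) (g v) = B3 u v"
    "\<And>u v. h (u - v) = h u - h v" "\<And>u v. B3 (h u) (h v) = B3 u v"
    using g h unfolding symmetry_def by blast+
  moreover have "lborel_preserving (g \<circ> h)"
    using g h by (simp add: symmetry_def lborel_preserving_comp)
  ultimately show ?thesis
    unfolding symmetry_def by simp
qed

lemma symmetry_measurable: "symmetry g \<Longrightarrow> g \<in> borel_measurable borel"
  by (simp add: symmetry_def lborel_preserving_def)

lemma symmetry_word_map: "(\<And>g. g \<in> set ws \<Longrightarrow> symmetry g) \<Longrightarrow> symmetry (word_map ws)"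
  by (induction ws) (simp_all add: word_map_def symmetry_id symmetry_comp)

lemma symmetry_rx: "symmetry rx"
  unfolding symmetry_def
proof (intro conjI allI)
  have "lborel_preserving (\<lambda>(a, b, c). ((- 1) * a, 0 * a + 1 * b, 1 * a + 0 * b + 1 * c))"
    by (rule lborel_preserving_shear) simp_all
  then show "lborel_preserving rx"
    by (simp add: rx_def)
  fix u v
  show "rx (u - v) = rx u - rx v"
    by (cases u, cases v) (simp add: rx_def)
  show "B3 (rx u) (rx v) = B3 u v"
    by (cases u, cases v) (simp add: rx_def B3_def field_simps)
qed

lemma symmetry_ry: "symmetry ry"
  unfolding symmetry_def
proof (intro conjI allI)
  have "lborel_preserving (\<lambda>(a, b, c). (1 * a, 0 * a + (- 1) * b, 0 * a + 1 * b + 1 * c))"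
    by (rule lborel_preserving_shear) simp_all
  then show "lborel_preserving ry"
    by (simp add: ry_def)
  fix u v
  show "ry (u - v) = ry u - ry v"
    by (cases u, cases v) (simp add: ry_def)
  show "B3 (ry u) (ry v) = B3 u v"
    by (cases u, cases v) (simp add: ry_def B3_def field_simps)
qed

text \<open>\<open>rz\<close> is lower triangular after reversing the order of the coordinates.\<close>

lemma symmetry_rz: "symmetry rz"
  unfolding symmetry_def
proof (intro conjI allI)
  have "lborel_preserving (\<lambda>(a, b, c). ((- 1) * a, 1 * a + 1 * b, 1 * a + 0 * b + 1 * c))"
    by (rule lborel_preserving_shear) simp_all
  then have "lborel_preserving
      ((\<lambda>(a, b, c). (c, b, a)) \<circ> (\<lambda>(a, b, c). (- a, a + b, a + c)) \<circ> (\<lambda>(a, b, c). (c, b, a)))"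
    by (simp add: lborel_preserving_comp lborel_preserving_reverse)
  moreover have "(\<lambda>(a, b, c). (c, b, a)) \<circ> (\<lambda>(a, b, c). (- a, a + b, a + c)) \<circ> (\<lambda>(a, b, c). (c, b, a)) = rz"
    by (auto simp: rz_def add.commute)
  ultimately show "lborel_preserving rz"
    by simp
  fix u v
  show "rz (u - v) = rz u - rz v"
    by (cases u, cases v) (simp add: rz_def)
  show "B3 (rz u) (rz v) = B3 u v"
    by (cases u, cases v) (simp add: rz_def B3_def field_simps)
qed

lemma symmetry_image_words: "w \<in> set image_words \<Longrightarrow> symmetry (word_map w)"
  by (rule symmetry_word_map) (auto simp: image_words_def symmetry_rx symmetry_ry symmetry_rz)

text \<open>Identity (1), first form: \<open>K2\<close> is the signed sum over the group of the factors by which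
  \<open>G\<close> changes when its centre moves from \<open>X\<close> to an image \<open>g X\<close>.\<close>

lemma K2_image_sum:
  "K2 a b c x y z =
     (\<Sum>w\<leftarrow>image_words. (- 1) ^ length w *
        exp (2 * (B3 (word_map w (x, y, z)) (a, b, c) - B3 (x, y, z) (a, b, c))))"
  unfolding K2_def image_words_def word_map_def
  by (simp add: rx_def ry_def rz_def B3_def,
      simp only: left_diff_distrib right_diff_distrib mult_1_left mult_1_right mult_exp_exp,
      simp add: algebra_simps)

text \<open>Since \<open>rx\<close> and \<open>ry\<close> are odd and fix the planes \<open>x = 0\<close> and \<open>y = 0\<close>, the image sum cancels
  in pairs there: \<open>K2\<close> vanishes identically on these mirrors.\<close>

lemma K2_vanishes_on_mirrors:
  "K2 a b c 0 y z = 0" "K2 a b c x 0 z = 0"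
  unfolding K2_image_sum image_words_def word_map_def
  by (simp_all add: rx_def ry_def rz_def B3_def algebra_simps)

lemma G_K2_image_sum:
  "G ((x, y, z) - (a, b, c)) * K2 a b c x y z
     = (\<Sum>w\<leftarrow>image_words. (- 1) ^ length w * G (word_map w (x, y, z) - (a, b, c)))"
proof -
  let ?X = "(x, y, z)" and ?p = "(a, b, c)"
  have "G (word_map w ?X - ?p) = G (?X - ?p) * exp (2 * (B3 (word_map w ?X) ?p - B3 ?X ?p))"
    if "w \<in> set image_words" for w
    using symmetry_image_words[OF that] by (intro G_shift) (simp add: symmetry_def)
  then have "(\<Sum>w\<leftarrow>image_words. (- 1) ^ length w * G (word_map w ?X - ?p))
      = (\<Sum>w\<leftarrow>image_words. G (?X - ?p) * ((- 1) ^ length w * exp (2 * (B3 (word_map w ?X) ?p - B3 ?X ?p))))"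
    by (intro arg_cong[where f=sum_list] map_cong) simp_all
  also have "\<dots> = G (?X - ?p) * K2 a b c x y z"
    by (simp add: sum_list_const_mult K2_image_sum)
  finally show ?thesis ..
qed

definition octant :: "R3 set" where "octant = {0..} \<times> {0..} \<times> {0..}"

lemma octant_measurable[measurable]: "octant \<in> sets borel"
  unfolding octant_def by (intro borel_closed closed_Times closed_atLeast)

text \<open>Identity (2): the images of the octant under the group tile space, and their signed
  indicator sum is a combination of products of signs.\<close>

lemma signed_indicator_sum:
  fixes a b c :: real
  shows "(\<Sum>w\<leftarrow>image_words. (- 1) ^ length w * indicator octant (word_map w (a, b, c)))
     = sgn a * sgn b + sgn c * sgn (a + b + c) - sgn (a + c) * sgn (b + c)"
proof -
  have ind: "indicator octant (u, v, t) = (if 0 \<le> u \<and> 0 \<le> v \<and> 0 \<le> t then 1 else (0 :: real))" for u v t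
    by (simp add: octant_def indicator_def)
  show ?thesis
    unfolding image_words_def word_map_def
    apply (simp add: rx_def ry_def rz_def ind)
    by (cases a "0::real" rule: linorder_cases; cases b "0::real" rule: linorder_cases;
        cases c "0::real" rule: linorder_cases; cases "a + c" "0::real" rule: linorder_cases;
        cases "b + c" "0::real" rule: linorder_cases; cases "a + b + c" "0::real" rule: linorder_cases)
      (simp_all add: sgn_if)
qed

lemma G_indicator_integrable:
  assumes "symmetry g"
  shows "integrable lborel (\<lambda>q. G (X - q) * indicator octant (g q))"
proof -
  have [measurable]: "g \<in> borel_measurable borel"
    using assms by (rule symmetry_measurable)
  have "(\<lambda>q. indicator octant (g q) :: real) \<in> borel_measurable borel"
    by measurable
  then show ?thesis
    by (rule G_integrable_bounded) (simp add: indicator_def)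
qed

lemma octant_change_of_variables:
  assumes "symmetry g"
  shows "(\<integral>p. G (g X - p) * indicator octant p \<partial>lborel) = (\<integral>q. G (X - q) * indicator octant (g q) \<partial>lborel)"
proof -
  have pres: "lborel_preserving g" and lin: "\<And>u v. g (u - v) = g u - g v"
    and inv: "\<And>u v. B3 (g u) (g v) = B3 u v"
    using assms unfolding symmetry_def by blast+
  have [measurable]: "g \<in> borel_measurable borel"
    using assms by (rule symmetry_measurable)
  have "(\<integral>q. G (X - q) * indicator octant (g q) \<partial>lborel) = (\<integral>q. G (g X - g q) * indicator octant (g q) \<partial>lborel)"
    by (simp add: lin[symmetric] G_exp_B3 inv)
  also have "\<dots> = (\<integral>p. G (g X - p) * indicator octant p \<partial>lborel)"
    by (rule lborel_preserving_integral[OF pres, where f="\<lambda>p. G (g X - p) * indicator octant p"]) measurable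
  finally show ?thesis ..
qed

lemma G_sgn_sgn_integrable:
  assumes "symmetry g"
  shows "integrable lborel (\<lambda>q. G (X - q) * (sgn (fst (g q)) * sgn (fst (snd (g q)))))"
proof (rule G_integrable_bounded)
  have g: "g \<in> borel_measurable borel"
    using assms by (rule symmetry_measurable)
  have [measurable]: "(\<lambda>q. fst (g q)) \<in> borel_measurable borel" "(\<lambda>q. fst (snd (g q))) \<in> borel_measurable borel"
    using measurable_compose[OF g R3_coordinates_measurable(1)]
      measurable_compose[OF g R3_coordinates_measurable(2)] by simp_all
  show "(\<lambda>q. sgn (fst (g q)) * sgn (fst (snd (g q)))) \<in> borel_measurable borel"
    by measurable
qed (auto simp: abs_mult sgn_if)

lemma G_sgn_sgn_integral_symmetry:
  assumes "symmetry g"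
  shows "(\<integral>q. G (X - q) * (sgn (fst (g q)) * sgn (fst (snd (g q)))) \<partial>lborel)
     = pi * sqrt (pi / 2) * erf (fst (g X)) * erf (fst (snd (g X)))"
proof -
  have pres: "lborel_preserving g" and lin: "\<And>u v. g (u - v) = g u - g v"
    and inv: "\<And>u v. B3 (g u) (g v) = B3 u v"
    using assms unfolding symmetry_def by blast+
  have "(\<integral>q. G (X - q) * (sgn (fst (g q)) * sgn (fst (snd (g q)))) \<partial>lborel)
      = (\<integral>q. G (g X - g q) * (sgn (fst (g q)) * sgn (fst (snd (g q)))) \<partial>lborel)"
    by (simp add: lin[symmetric] G_exp_B3 inv)
  also have "\<dots> = (\<integral>p. G (g X - p) * (sgn (fst p) * sgn (fst (snd p))) \<partial>lborel)"
    by (rule lborel_preserving_integral[OF pres, where f="\<lambda>p. G (g X - p) * (sgn (fst p) * sgn (fst (snd p)))"])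
      measurable
  finally show ?thesis
    by (simp add: G_sgn_sgn_integral)
qed

lemma integral_sum_list:
  fixes f :: "'i \<Rightarrow> 'a \<Rightarrow> real"
  assumes "\<And>i. i \<in> set is \<Longrightarrow> integrable M (f i)"
  shows "(\<integral>x. (\<Sum>i\<leftarrow>is. f i x) \<partial>M) = (\<Sum>i\<leftarrow>is. \<integral>x. f i x \<partial>M)"
proof -
  have "(\<Sum>i\<leftarrow>is. h i) = (\<Sum>k<length is. h (is ! k))" for h :: "'i \<Rightarrow> real"
    by (simp add: sum_list_sum_nth atLeast0LessThan)
  then show ?thesis
    using assms by (simp add: Bochner_Integration.integral_sum)
qed

lemma octant_integral_image_sum:
  "(LINT p : octant | lborel. G ((x, y, z) - p) * K2 (fst p) (fst (snd p)) (snd (snd p)) x y z)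
     = (\<integral>q. G ((x, y, z) - q) * (\<Sum>w\<leftarrow>image_words. (- 1) ^ length w * indicator octant (word_map w q)) \<partial>lborel)"
proof -
  let ?X = "(x, y, z)" and ?s = "\<lambda>w :: (R3 \<Rightarrow> R3) list. (- 1 :: real) ^ length w"
  have "(LINT p : octant | lborel. G (?X - p) * K2 (fst p) (fst (snd p)) (snd (snd p)) x y z)
      = (\<integral>p. (\<Sum>w\<leftarrow>image_words. ?s w * (G (word_map w ?X - p) * indicator octant p)) \<partial>lborel)"
    unfolding set_lebesgue_integral_def
  proof (intro Bochner_Integration.integral_cong refl)
    fix p :: R3
    obtain a b c where p: "p = (a, b, c)"
      by (cases p)
    have "(\<Sum>w\<leftarrow>image_words. ?s w * (G (word_map w ?X - p) * indicator octant p))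
        = (\<Sum>w\<leftarrow>image_words. ?s w * G (word_map w ?X - p)) * indicator octant p"
      by (simp add: sum_list_mult_const[symmetric] mult.assoc)
    then show "indicator octant p *\<^sub>R (G (?X - p) * K2 (fst p) (fst (snd p)) (snd (snd p)) x y z)
        = (\<Sum>w\<leftarrow>image_words. ?s w * (G (word_map w ?X - p) * indicator octant p))"
      using G_K2_image_sum[of x y z a b c] by (simp add: p)
  qed
  also have "\<dots> = (\<Sum>w\<leftarrow>image_words. ?s w * (\<integral>p. G (word_map w ?X - p) * indicator octant p \<partial>lborel))"
    by (subst integral_sum_list) (auto intro!: G_integrable_bounded simp: indicator_def)
  also have "\<dots> = (\<Sum>w\<leftarrow>image_words. ?s w * (\<integral>q. G (?X - q) * indicator octant (word_map w q) \<partial>lborel))"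
    by (intro arg_cong[where f=sum_list] map_cong refl)
      (simp add: octant_change_of_variables symmetry_image_words)
  also have "\<dots> = (\<integral>q. (\<Sum>w\<leftarrow>image_words. ?s w * (G (?X - q) * indicator octant (word_map w q))) \<partial>lborel)"
    by (subst integral_sum_list) (simp_all add: G_indicator_integrable symmetry_image_words)
  also have "\<dots> = (\<integral>q. G (?X - q) * (\<Sum>w\<leftarrow>image_words. ?s w * indicator octant (word_map w q)) \<partial>lborel)"
    by (simp add: sum_list_const_mult[symmetric] mult.left_commute)
  finally show ?thesis .
qed

text \<open>The three sign products of identity (2) are \<open>sgn q\<^sub>1 sgn q\<^sub>2\<close> pulled back along
  \<open>id\<close>, \<open>rz \<circ> rx\<close> and \<open>rz\<close>, so each integral is a product of two error functions.\<close>

lemma G_sign_combination_integral: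
  "(\<integral>q. G ((x, y, z) - q) *
        (sgn (fst q) * sgn (fst (snd q)) + sgn (snd (snd q)) * sgn (fst q + fst (snd q) + snd (snd q))
         - sgn (fst q + snd (snd q)) * sgn (fst (snd q) + snd (snd q))) \<partial>lborel)
     = pi * sqrt (pi / 2) * (erf x * erf y + erf z * erf (x + y + z) - erf (x + z) * erf (y + z))"
proof -
  let ?X = "(x, y, z)" and ?P = "\<lambda>g q. sgn (fst (g q)) * sgn (fst (snd (g q)))"
  let ?I = "\<lambda>g. \<integral>q. G (?X - q) * ?P g q \<partial>lborel"
  have sym: "symmetry id" "symmetry (rz \<circ> rx)" "symmetry rz"
    by (simp_all add: symmetry_id symmetry_comp symmetry_rx symmetry_rz)
  have "(\<integral>q. G (?X - q) *
        (sgn (fst q) * sgn (fst (snd q)) + sgn (snd (snd q)) * sgn (fst q + fst (snd q) + snd (snd q))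
         - sgn (fst q + snd (snd q)) * sgn (fst (snd q) + snd (snd q))) \<partial>lborel)
      = (\<integral>q. G (?X - q) * ?P id q + G (?X - q) * ?P (rz \<circ> rx) q - G (?X - q) * ?P rz q \<partial>lborel)"
    by (intro Bochner_Integration.integral_cong refl) (auto simp: rx_def rz_def algebra_simps split: prod.split)
  also have "\<dots> = ?I id + ?I (rz \<circ> rx) - ?I rz"
    using sym[THEN G_sgn_sgn_integrable, of ?X]
    by (simp add: Bochner_Integration.integral_add Bochner_Integration.integral_diff)
  also have "\<dots> = pi * sqrt (pi / 2) * (erf x * erf y + erf z * erf (x + y + z) - erf (x + z) * erf (y + z))"
    unfolding sym[THEN G_sgn_sgn_integral_symmetry]
    by (simp add: rx_def rz_def algebra_simps)
  finally show ?thesis .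
qed

lemma octant_integral_G_K2:
  "(LINT p : octant | lborel. G ((x, y, z) - p) * K2 (fst p) (fst (snd p)) (snd (snd p)) x y z)
     = pi * sqrt (pi / 2) * (erf x * erf y + erf z * erf (x + y + z) - erf (x + z) * erf (y + z))"
proof -
  have "(\<Sum>w\<leftarrow>image_words. (- 1) ^ length w * indicator octant (word_map w q))
      = sgn (fst q) * sgn (fst (snd q)) + sgn (snd (snd q)) * sgn (fst q + fst (snd q) + snd (snd q))
        - sgn (fst q + snd (snd q)) * sgn (fst (snd q) + snd (snd q))" for q :: R3
    by (cases q) (simp add: signed_indicator_sum)
  then show ?thesis
    unfolding octant_integral_image_sum by (simp only: G_sign_combination_integral)
qed

lemma normalisation: "sqrt 2 / pi powr (3/2) * (pi * sqrt (pi / 2)) = 1"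
proof -
  have "pi powr (3/2) = pi * sqrt pi"
    by (simp add: powr_add[of pi 1 "1/2", simplified] powr_half_sqrt)
  then show ?thesis
    by (simp add: real_sqrt_divide field_simps)
qed

theorem mainTheorem8:
  shows "(\<forall>x' y' z' z. x' \<ge> 0 \<longrightarrow> y' \<ge> 0 \<longrightarrow> z' \<ge> 0 \<longrightarrow> z \<ge> 0 \<longrightarrow>
            K2 x' y' z' 0 0 z = 0
          \<and> ((\<lambda>x. K2 x' y' z' x 0 z) has_real_derivative 0) (at 0)
          \<and> ((\<lambda>y. K2 x' y' z' 0 y z) has_real_derivative 0) (at 0))
       \<and> (\<forall>x y z. x \<ge> 0 \<longrightarrow> y \<ge> 0 \<longrightarrow> z \<ge> 0 \<longrightarrow>
            sqrt 2 / pi powr (3/2) *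
              (LINT p : {0..} \<times> {0..} \<times> {0..} | lborel.
                 W (x - fst p) (y - fst (snd p)) (z - snd (snd p)) *
                 K2 (fst p) (fst (snd p)) (snd (snd p)) x y z)
            = erf x * erf y + erf z * erf (x + y + z) - erf (x + z) * erf (y + z))"
proof (intro conjI allI impI)
  fix x' y' z' z :: real
  show "K2 x' y' z' 0 0 z = 0"
    by (rule K2_vanishes_on_mirrors(1))
  show "((\<lambda>x. K2 x' y' z' x 0 z) has_real_derivative 0) (at 0)"
    "((\<lambda>y. K2 x' y' z' 0 y z) has_real_derivative 0) (at 0)"
    by (simp_all add: K2_vanishes_on_mirrors)
next
  fix x y z :: real
  have "W (x - fst p) (y - fst (snd p)) (z - snd (snd p)) = G ((x, y, z) - p)" for p
    by (simp add: G_def)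
  then show "sqrt 2 / pi powr (3/2) *
      (LINT p : {0..} \<times> {0..} \<times> {0..} | lborel.
         W (x - fst p) (y - fst (snd p)) (z - snd (snd p)) * K2 (fst p) (fst (snd p)) (snd (snd p)) x y z)
      = erf x * erf y + erf z * erf (x + y + z) - erf (x + z) * erf (y + z)"
    using octant_integral_G_K2[of x y z] normalisation by (simp add: octant_def)
qed

end
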